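(* Let $F$ be a bipartite graph or an odd cycle. For every $\delta>0$ there exists $\varepsilon>0$ such that for all sufficiently large $n$, every $n$-vertex graph $G$ containing no copy of $F^{\triangle}$ and having at least $n^2/4-\varepsilon n^2$ edges can be made bipartite by removing at most $\delta n^2$ edges. In particular, every $n$-vertex graph $G$ containing no copy of $F^{\triangle}$ satisfies $|G|\le n^2/4+o(n^2)$.
   Context: $|G|$ is the number of edges of $G$. The $\triangle$-blowup $F^{\triangle}$ of a graph $F$ is obtained by replacing each edge $uv$ by a triangle $uvw_{uv}$ with a new vertex $w_{uv}$, distinct edges receiving distinct new vertices. *)

theory Defs
  imports Complex_Main
begin

definition graph :: "'a set \<Rightarrow> 'a set set \<Rightarrow> bool" where
  "graph V E \<longleftrightarrow> finite V \<and> (\<forall>e\<in>E. \<exists>u v. e = {u, v} \<and> u \<noteq> v \<and> u \<in> V \<and> v \<in> V)"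

definition contains_copy :: "'b set \<Rightarrow> 'b set set \<Rightarrow> 'a set \<Rightarrow> 'a set set \<Rightarrow> bool" where
  "contains_copy V E VH EH \<longleftrightarrow>
     (\<exists>f. inj_on f VH \<and> f ` VH \<subseteq> V \<and> (\<forall>u v. {u, v} \<in> EH \<longrightarrow> {f u, f v} \<in> E))"

definition bipartite :: "'a set \<Rightarrow> 'a set set \<Rightarrow> bool" where
  "bipartite V E \<longleftrightarrow> (\<exists>A \<subseteq> V. \<forall>e\<in>E. card (e \<inter> A) = 1)"

definition odd_cycle :: "'a set \<Rightarrow> 'a set set \<Rightarrow> bool" where
  "odd_cycle V E \<longleftrightarrow> (\<exists>(k::nat) g. k \<ge> 3 \<and> odd k \<and> bij_betw g {0..<k} V \<and>
      E = {{g i, g ((i + 1) mod k)} | i. i < k})"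

text \<open>The triangle blowup: each edge e = {u,v} is replaced by a triangle u v w_e,
  with the new vertex w_e represented as Inr e.\<close>
definition tri_blowup_V :: "'a set \<Rightarrow> 'a set set \<Rightarrow> ('a + 'a set) set" where
  "tri_blowup_V V E = Inl ` V \<union> Inr ` E"

definition tri_blowup_E :: "'a set \<Rightarrow> 'a set set \<Rightarrow> ('a + 'a set) set set" where
  "tri_blowup_E V E = (\<lambda>e. Inl ` e) ` E \<union> {{Inl u, Inr e} | u e. e \<in> E \<and> u \<in> e}"

end

(*
  A triangle blowup of a 3-colourable graph F is again 3-colourable (give the new vertex of each
  triangle the colour missing from its base edge), so it embeds into the complete tripartite graph
  K_3(t) once t is at least its order; bipartite graphs and cycles are 3-colourable.

  By Kovari-Sos-Turan supersaturation, applied twice, a graph on n vertices with at least eta n^3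
  triangles contains K_3(t) for large n. Hence an F-triangle-blowup-free graph has T = o(n^3)
  triangle incidences (edge e together with a common neighbour of its ends).

  For an edge e, count the vertices adjacent to both ends or to neither: summing over the edges
  gives sum_x |D_x| = n|E| - sum_v d(v)^2 + 2T, where D_x is the set of edges inside or outside
  the neighbourhood of x and E - D_x is bipartite. Together with sum_v d(v)^2 - n|E| <= T and the
  Cauchy-Schwarz bound sum_v d(v)^2 >= 4|E|^2/n this yields
    n^2 min_x |D_x| <= |E| (n^2 - 4|E|) + 2nT   and   |E| (4|E| - n^2) <= nT,
  which are the two claims once T = o(n^3).
*)
theory Submission
  imports Defs "HOL-Analysis.Convex"
begin

section \<open>Neighbourhoods, degrees and triangles\<close>

definition neighbours :: "'b set \<Rightarrow> 'b set set \<Rightarrow> 'b \<Rightarrow> 'b set" where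
  "neighbours V E v = {x\<in>V. {v, x} \<in> E}"

abbreviation degree :: "'b set \<Rightarrow> 'b set set \<Rightarrow> 'b \<Rightarrow> nat" where
  "degree V E v \<equiv> card (neighbours V E v)"

definition common_neighbours :: "'b set \<Rightarrow> 'b set set \<Rightarrow> 'b set \<Rightarrow> 'b set" where
  "common_neighbours V E e = {x\<in>V. e \<subseteq> neighbours V E x}"

text \<open>Three times the number of triangles.\<close>
definition triangle_incidences :: "'b set \<Rightarrow> 'b set set \<Rightarrow> nat" where
  "triangle_incidences V E = (\<Sum>e\<in>E. card (common_neighbours V E e))"

lemma graph_edgeE:
  assumes "graph V E" "e \<in> E"
  obtains u v where "e = {u, v}" "u \<noteq> v" "u \<in> V" "v \<in> V"
  using assms unfolding graph_def by blast

lemma graph_finite: "graph V E \<Longrightarrow> finite V"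
  by (simp add: graph_def)

lemma graph_edge_subset: "graph V E \<Longrightarrow> e \<in> E \<Longrightarrow> e \<subseteq> V"
  by (elim graph_edgeE) auto

lemma graph_singleton_not_edge: "graph V E \<Longrightarrow> {v} \<notin> E"
  by (auto elim: graph_edgeE simp: doubleton_eq_iff)

lemma graph_subset_edges: "graph V E \<Longrightarrow> D \<subseteq> E \<Longrightarrow> graph V D"
  unfolding graph_def by blast

lemma graph_finite_edges:
  assumes "graph V E"
  shows "finite E" and "card E \<le> card V ^ 2"
proof -
  have sub: "E \<subseteq> (\<lambda>(u, v). {u, v}) ` (V \<times> V)"
    using assms by (fastforce elim: graph_edgeE)
  have fin: "finite V" using assms by (rule graph_finite)
  show "finite E" using finite_subset[OF sub] fin by simp
  have "card E \<le> card (V \<times> V)"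
    using card_mono[OF _ sub] card_image_le[of "V \<times> V" "\<lambda>(u, v). {u, v}"] fin by fastforce
  then show "card E \<le> card V ^ 2" by (simp add: card_cartesian_product power2_eq_square)
qed

lemma neighbours_subset: "neighbours V E v \<subseteq> V"
  unfolding neighbours_def by auto

lemma finite_neighbours: "graph V E \<Longrightarrow> finite (neighbours V E v)"
  by (meson finite_subset neighbours_subset graph_finite)

lemma in_neighbours_commute:
  "u \<in> V \<Longrightarrow> x \<in> neighbours V E u \<longleftrightarrow> x \<in> V \<and> u \<in> neighbours V E x"
  unfolding neighbours_def by (auto simp: insert_commute)

lemma card_incident_edges:
  assumes "graph V E" "v \<in> V"
  shows "card {e\<in>E. v \<in> e} = degree V E v"
proof -
  have "{e\<in>E. v \<in> e} = (\<lambda>x. {v, x}) ` neighbours V E v"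
  proof (intro set_eqI iffI)
    fix e assume e: "e \<in> {e\<in>E. v \<in> e}"
    then obtain a b where "e = {a, b}" "a \<in> V" "b \<in> V"
      using assms(1) by (blast elim: graph_edgeE)
    with e have "e = {v, if a = v then b else a}" "(if a = v then b else a) \<in> V" by auto
    with e show "e \<in> (\<lambda>x. {v, x}) ` neighbours V E v"
      unfolding neighbours_def by blast
  qed (auto simp: neighbours_def)
  moreover have "inj_on (\<lambda>x. {v, x}) (neighbours V E v)"
    by (auto simp: inj_on_def doubleton_eq_iff)
  ultimately show ?thesis by (simp add: card_image)
qed

lemma sum_degree:
  assumes "graph V E"
  shows "(\<Sum>v\<in>V. degree V E v) = 2 * card E"
proof -
  have "(\<Sum>v\<in>V. card {e\<in>E. v \<in> e}) = (\<Sum>e\<in>E. 2)"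
  proof (rule sum_multicount_gen)
    show "\<forall>e\<in>E. card {v\<in>V. v \<in> e} = 2"
    proof
      fix e assume "e \<in> E"
      then have "{v\<in>V. v \<in> e} = e" using assms graph_edge_subset by blast
      with \<open>e \<in> E\<close> show "card {v\<in>V. v \<in> e} = 2" using assms by (auto elim: graph_edgeE)
    qed
  qed (use assms graph_finite graph_finite_edges in auto)
  then show ?thesis using assms by (simp add: card_incident_edges)
qed

lemma sum_degree_squares:
  assumes "graph V E"
  shows "(\<Sum>e\<in>E. \<Sum>w\<in>e. degree V E w) = (\<Sum>w\<in>V. degree V E w ^ 2)"
proof -
  have "(\<Sum>e\<in>E. \<Sum>w\<in>e. degree V E w) = (\<Sum>e\<in>E. \<Sum>w\<in>{w\<in>V. w \<in> e}. degree V E w)"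
    using assms graph_edge_subset by (intro sum.cong) (auto intro: arg_cong[where f = "sum _"])
  also have "\<dots> = (\<Sum>w\<in>V. \<Sum>e\<in>{e\<in>E. w \<in> e}. degree V E w)"
    using assms by (intro sum.swap_restrict) (simp_all add: graph_finite graph_finite_edges)
  also have "\<dots> = (\<Sum>w\<in>V. card {e\<in>E. w \<in> e} * degree V E w)"
    by simp
  also have "\<dots> = (\<Sum>w\<in>V. degree V E w ^ 2)"
    using assms by (simp add: card_incident_edges power2_eq_square)
  finally show ?thesis .
qed

lemma edges_squared_le:
  assumes "graph V E"
  shows "4 * card E ^ 2 \<le> card V * (\<Sum>w\<in>V. degree V E w ^ 2)"
proof -
  have "real (\<Sum>w\<in>V. degree V E w * 1) ^ 2 \<le> real (\<Sum>w\<in>V. degree V E w ^ 2) * real (\<Sum>w\<in>V. 1 ^ 2)"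
    using Cauchy_Schwarz_ineq_sum[of "\<lambda>w. real (degree V E w)" "\<lambda>_. 1" V] by simp
  then have "real ((2 * card E) ^ 2) \<le> real ((\<Sum>w\<in>V. degree V E w ^ 2) * card V)"
    using sum_degree[OF assms] by simp
  then show ?thesis by (simp only: of_nat_le_iff power_mult_distrib mult.commute) simp
qed

section \<open>Few triangles and many edges force near-bipartiteness\<close>

text \<open>Inclusion-exclusion for the neighbourhoods of the two ends of an edge.\<close>
lemma card_disjoint_neighbours_plus_degrees:
  assumes "graph V E" "e \<in> E"
  shows "card {x\<in>V. e \<inter> neighbours V E x = {}} + (\<Sum>w\<in>e. degree V E w)
           = card V + card (common_neighbours V E e)"
proof -
  obtain u v where uv: "e = {u, v}" "u \<noteq> v" "u \<in> V" "v \<in> V"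
    using assms by (rule graph_edgeE)
  let ?Nu = "neighbours V E u" and ?Nv = "neighbours V E v"
  have common: "common_neighbours V E e = ?Nu \<inter> ?Nv"
    using uv in_neighbours_commute[of u V _ E] in_neighbours_commute[of v V _ E]
    by (auto simp: common_neighbours_def)
  have disjoint: "{x\<in>V. e \<inter> neighbours V E x = {}} = V - (?Nu \<union> ?Nv)"
    using uv in_neighbours_commute[of u V _ E] in_neighbours_commute[of v V _ E] by auto
  have "card (V - (?Nu \<union> ?Nv)) + card (?Nu \<union> ?Nv) = card V"
    using assms(1) graph_finite neighbours_subset[of V E u] neighbours_subset[of V E v]
    by (metis card_Diff_subset card_mono finite_subset le_add_diff_inverse2 le_sup_iff)
  moreover have "card (?Nu \<union> ?Nv) + card (?Nu \<inter> ?Nv) = card ?Nu + card ?Nv"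
    by (rule card_Un_Int[symmetric]) (simp_all add: finite_neighbours[OF assms(1)])
  moreover have "(\<Sum>w\<in>e. degree V E w) = card ?Nu + card ?Nv"
    using uv by simp
  ultimately show ?thesis unfolding common disjoint by presburger
qed

lemma sum_degree_squares_le:
  assumes "graph V E"
  shows "(\<Sum>w\<in>V. degree V E w ^ 2) \<le> card V * card E + triangle_incidences V E"
proof -
  have "(\<Sum>w\<in>V. degree V E w ^ 2) = (\<Sum>e\<in>E. \<Sum>w\<in>e. degree V E w)"
    using sum_degree_squares[OF assms] ..
  also have "\<dots> \<le> (\<Sum>e\<in>E. card V + card (common_neighbours V E e))"
  proof (rule sum_mono)
    fix e assume "e \<in> E"
    from card_disjoint_neighbours_plus_degrees[OF assms this]
    show "(\<Sum>w\<in>e. degree V E w) \<le> card V + card (common_neighbours V E e)" by linarith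
  qed
  also have "\<dots> = card V * card E + triangle_incidences V E"
    by (simp add: sum.distrib triangle_incidences_def)
  finally show ?thesis .
qed

lemma bipartite_Diff_edges_inside_or_outside:
  assumes "graph V E" "A \<subseteq> V"
  shows "bipartite V (E - {e\<in>E. e \<subseteq> A \<or> e \<inter> A = {}})"
  unfolding bipartite_def
proof (intro exI[of _ A] conjI ballI)
  fix e assume e: "e \<in> E - {e\<in>E. e \<subseteq> A \<or> e \<inter> A = {}}"
  then obtain u v where "e = {u, v}" "u \<noteq> v"
    using assms(1) by (blast elim: graph_edgeE)
  with e have "e \<inter> A = {u} \<or> e \<inter> A = {v}" by auto
  then show "card (e \<inter> A) = 1" by auto
qed (fact assms(2))

text \<open>Deleting the edges inside or outside the neighbourhood of a vertex leaves a bipartite graph;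
  averaging over the vertex gives the bound.\<close>
lemma bipartite_after_deleting_edges:
  assumes "graph V E" "V \<noteq> {}"
  shows "\<exists>D\<subseteq>E. bipartite V (E - D) \<and>
    card V * card D + (\<Sum>w\<in>V. degree V E w ^ 2) \<le> card V * card E + 2 * triangle_incidences V E"
proof -
  define P where "P x e \<longleftrightarrow> e \<subseteq> neighbours V E x \<or> e \<inter> neighbours V E x = {}" for x e
  define D where "D x = {e\<in>E. P x e}" for x
  have fin: "finite V" "finite E"
    using assms(1) graph_finite graph_finite_edges by auto
  have per_edge: "card {x\<in>V. P x e} + (\<Sum>w\<in>e. degree V E w) = card V + 2 * card (common_neighbours V E e)"
    if "e \<in> E" for e
  proof -
    have "e \<noteq> {}" using assms(1) that by (auto elim: graph_edgeE)
    then have "card {x\<in>V. P x e} = card (common_neighbours V E e) + card {x\<in>V. e \<inter> neighbours V E x = {}}"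
      unfolding P_def common_neighbours_def using fin
      by (subst card_Un_disjoint[symmetric]) (auto intro: arg_cong[where f = card])
    with card_disjoint_neighbours_plus_degrees[OF assms(1) that] show ?thesis by linarith
  qed
  have "(\<Sum>x\<in>V. card (D x)) = (\<Sum>e\<in>E. card {x\<in>V. P x e})"
    unfolding D_def using fin by (intro sum_multicount_gen) auto
  then have "(\<Sum>x\<in>V. card (D x)) + (\<Sum>w\<in>V. degree V E w ^ 2)
      = (\<Sum>e\<in>E. card {x\<in>V. P x e} + (\<Sum>w\<in>e. degree V E w))"
    by (simp add: sum.distrib sum_degree_squares[OF assms(1)])
  also have "\<dots> = card V * card E + 2 * triangle_incidences V E"
    by (simp add: per_edge sum.distrib triangle_incidences_def sum_distrib_left)
  finally have total: "(\<Sum>x\<in>V. card (D x)) + (\<Sum>w\<in>V. degree V E w ^ 2)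
      = card V * card E + 2 * triangle_incidences V E" .
  have "Min ((\<lambda>x. card (D x)) ` V) \<in> (\<lambda>x. card (D x)) ` V"
    using fin assms(2) by (intro Min_in) auto
  then obtain x where "x \<in> V" "Min ((\<lambda>x. card (D x)) ` V) = card (D x)" by blast
  then have "card V * card (D x) \<le> (\<Sum>x\<in>V. card (D x))"
    using card_Min_le_sum[OF fin(1), of "\<lambda>x. card (D x)"] by simp
  moreover have "bipartite V (E - D x)"
    unfolding D_def P_def by (rule bipartite_Diff_edges_inside_or_outside[OF assms(1) neighbours_subset])
  moreover have "D x \<subseteq> E" unfolding D_def by blast
  ultimately show ?thesis using total by (intro exI[of _ "D x"]) auto
qed

lemma edge_excess_le_triangles:
  assumes "graph V E"
  shows "real (card E) * (4 * real (card E) - real (card V) ^ 2) \<le> real (card V) * real (triangle_incidences V E)"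
proof -
  define n e S where "n = real (card V)" and "e = real (card E)"
    and "S = real (\<Sum>w\<in>V. degree V E w ^ 2)"
  have "4 * e ^ 2 \<le> n * S"
    unfolding n_def e_def S_def using edges_squared_le[OF assms, folded of_nat_le_iff[where 'a = real]] by simp
  moreover have "n * S \<le> n * (n * e + real (triangle_incidences V E))"
    unfolding n_def e_def S_def using sum_degree_squares_le[OF assms, folded of_nat_le_iff[where 'a = real]]
    by (intro mult_left_mono) simp_all
  ultimately show ?thesis unfolding n_def e_def by (simp add: algebra_simps power2_eq_square)
qed

lemma near_bipartite_inequality:
  assumes "graph V E" "V \<noteq> {}"
  shows "\<exists>D\<subseteq>E. bipartite V (E - D) \<and>
    real (card V) ^ 2 * real (card D)
      \<le> real (card E) * (real (card V) ^ 2 - 4 * real (card E)) + 2 * real (card V) * real (triangle_incidences V E)"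
proof -
  obtain D where D: "D \<subseteq> E" "bipartite V (E - D)" and
    bound: "card V * card D + (\<Sum>w\<in>V. degree V E w ^ 2) \<le> card V * card E + 2 * triangle_incidences V E"
    using bipartite_after_deleting_edges[OF assms] by blast
  define n e S T where "n = real (card V)" and "e = real (card E)"
    and "S = real (\<Sum>w\<in>V. degree V E w ^ 2)" and "T = real (triangle_incidences V E)"
  have "4 * (e * e) \<le> n * S"
    unfolding n_def e_def S_def
    using edges_squared_le[OF assms(1), folded of_nat_le_iff[where 'a = real]] by (simp add: power2_eq_square)
  moreover have "n * (n * real (card D) + S) \<le> n * (n * e + 2 * T)"
    unfolding n_def e_def S_def T_def using bound[folded of_nat_le_iff[where 'a = real]]
    by (intro mult_left_mono) simp_all
  moreover have "n * (n * real (card D) + S) = n ^ 2 * real (card D) + n * S"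
    and "n * (n * e + 2 * T) - 4 * (e * e) = e * (n ^ 2 - 4 * e) + 2 * n * T"
    by (simp_all add: power2_eq_square algebra_simps)
  ultimately have "n ^ 2 * real (card D) \<le> e * (n ^ 2 - 4 * e) + 2 * n * T"
    by linarith
  with D show ?thesis unfolding n_def e_def T_def by blast
qed

lemma near_bipartite_if_few_triangles:
  assumes "graph V E" "card V = n" "0 < n"
    and few: "real (triangle_incidences V E) \<le> \<epsilon> * real n ^ 3"
    and many: "real n ^ 2 / 4 - \<epsilon> * real n ^ 2 \<le> real (card E)"
  shows "\<exists>D\<subseteq>E. real (card D) \<le> 3 * \<epsilon> * real n ^ 2 \<and> bipartite V (E - D)"
proof -
  have "V \<noteq> {}" using assms(2,3) by auto
  then obtain D where D: "D \<subseteq> E" "bipartite V (E - D)" and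
    bound: "real n ^ 2 * real (card D)
      \<le> real (card E) * (real n ^ 2 - 4 * real (card E)) + 2 * real n * real (triangle_incidences V E)"
    using near_bipartite_inequality[OF assms(1)] assms(2) by auto
  have "0 \<le> \<epsilon> * real n ^ 3"
    using few of_nat_0_le_iff order_trans by blast
  then have "0 \<le> \<epsilon>"
    using assms(3) by (metis zero_le_mult_iff of_nat_0_less_iff zero_less_power not_le)
  have "real (card E) * (real n ^ 2 - 4 * real (card E)) \<le> \<epsilon> * real n ^ 4"
  proof (cases "real n ^ 2 \<le> 4 * real (card E)")
    case True
    then have "real (card E) * (real n ^ 2 - 4 * real (card E)) \<le> 0"
      by (intro mult_nonneg_nonpos) auto
    moreover have "0 \<le> \<epsilon> * real n ^ 4" using \<open>0 \<le> \<epsilon>\<close> by simp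
    ultimately show ?thesis by linarith
  next
    case False
    then have "real (card E) * (real n ^ 2 - 4 * real (card E)) \<le> (real n ^ 2 / 4) * (4 * \<epsilon> * real n ^ 2)"
      using many by (intro mult_mono) auto
    also have "\<dots> = \<epsilon> * real n ^ 4" by (simp add: power4_eq_xxxx power2_eq_square)
    finally show ?thesis .
  qed
  moreover have "2 * real n * real (triangle_incidences V E) \<le> 2 * real n * (\<epsilon> * real n ^ 3)"
    using few by (intro mult_left_mono) auto
  moreover have "2 * real n * (\<epsilon> * real n ^ 3) = 2 * (\<epsilon> * real n ^ 4)"
    and "real n ^ 2 * (3 * \<epsilon> * real n ^ 2) = 3 * (\<epsilon> * real n ^ 4)"
    by (simp_all add: power4_eq_xxxx power3_eq_cube power2_eq_square)
  ultimately have "real n ^ 2 * real (card D) \<le> real n ^ 2 * (3 * \<epsilon> * real n ^ 2)"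
    using bound by linarith
  then have "real (card D) \<le> 3 * \<epsilon> * real n ^ 2"
    using assms(3) by simp
  with D show ?thesis by blast
qed

lemma edges_le_if_few_triangles:
  assumes "graph V E" "card V = n"
    and few: "real (triangle_incidences V E) \<le> \<epsilon> * real n ^ 3"
  shows "real (card E) \<le> real n ^ 2 / 4 + \<epsilon> * real n ^ 2"
proof (cases "n = 0")
  case True
  then show ?thesis using graph_finite_edges(2)[OF assms(1)] assms(2) by simp
next
  case False
  have "0 \<le> \<epsilon> * real n ^ 3"
    using few of_nat_0_le_iff order_trans by blast
  then have "0 \<le> \<epsilon>"
    using False by (metis zero_le_mult_iff of_nat_0_less_iff zero_less_power not_le gr0I)
  show ?thesis
  proof (rule ccontr)
    assume "\<not> ?thesis"
    then have many: "real n ^ 2 / 4 + \<epsilon> * real n ^ 2 < real (card E)" by simp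
    have "(real n ^ 2 / 4) * (4 * \<epsilon> * real n ^ 2) < real (card E) * (4 * real (card E) - real n ^ 2)"
      using many \<open>0 \<le> \<epsilon>\<close> zero_le_power2[of "real n"] mult_nonneg_nonneg[of \<epsilon> "real n ^ 2"]
      by (intro mult_strict_mono) linarith+
    also have "\<dots> \<le> real n * real (triangle_incidences V E)"
      using edge_excess_le_triangles[OF assms(1)] assms(2) by simp
    also have "\<dots> \<le> real n * (\<epsilon> * real n ^ 3)"
      using few by (intro mult_left_mono) auto
    also have "\<dots> = (real n ^ 2 / 4) * (4 * \<epsilon> * real n ^ 2)"
      by (simp add: power3_eq_cube power2_eq_square)
    finally show False by simp
  qed
qed

section \<open>Supersaturation of complete tripartite graphs\<close>

lemma sum_le_threshold_split:
  fixes f :: "'q \<Rightarrow> real"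
  assumes "finite Q" "\<And>q. q \<in> Q \<Longrightarrow> f q \<le> b" "0 \<le> a"
  shows "sum f Q \<le> b * card {q\<in>Q. a \<le> f q} + a * card Q"
proof -
  let ?L = "{q\<in>Q. a \<le> f q}"
  have "sum f Q = sum f (Q - ?L) + sum f ?L"
    using assms(1) by (intro sum.subset_diff) auto
  also have "sum f ?L \<le> card ?L * b"
    using assms(2) by (intro sum_bounded_above) auto
  also have "sum f (Q - ?L) \<le> card (Q - ?L) * a"
    by (intro sum_bounded_above) auto
  also have "card (Q - ?L) * a \<le> card Q * a"
    using assms(1,3) by (intro mult_right_mono) (auto intro: card_mono)
  finally show ?thesis by (simp add: mult.commute)
qed

lemma sum_binomial_ge:
  fixes f :: "'q \<Rightarrow> nat" and p t :: nat and \<beta> :: real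
  assumes "finite Q" "\<And>q. q \<in> Q \<Longrightarrow> f q \<le> p" "1 \<le> t" "2 * real t \<le> \<beta> * real p"
    and dense: "\<beta> * real p * real (card Q) \<le> (\<Sum>q\<in>Q. real (f q))"
  shows "\<beta> / 2 * (\<beta> / (2 * real t)) ^ t * real (card Q) * real p ^ t \<le> (\<Sum>q\<in>Q. real (f q choose t))"
proof -
  have "0 < \<beta> * p" using assms(3,4) by linarith
  then have "0 < \<beta>" "0 < p" by (simp_all add: zero_less_mult_iff)
  define L where "L = {q\<in>Q. \<beta> * real p / 2 \<le> f q}"
  have "\<beta> * p * card Q \<le> p * card L + \<beta> * real p / 2 * card Q"
    using dense sum_le_threshold_split[OF assms(1), of "\<lambda>q. real (f q)" p "\<beta> * real p / 2"] assms(2)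
      \<open>0 < \<beta>\<close> unfolding L_def by fastforce
  then have "\<beta> / 2 * card Q \<le> card L"
    using \<open>0 < p\<close> by (simp add: field_simps)
  have large: "(\<beta> * real p / (2 * real t)) ^ t \<le> real (f q choose t)" if "q \<in> L" for q
  proof -
    have "\<beta> * real p / 2 \<le> f q" using that by (simp add: L_def)
    then have "t \<le> f q" using assms(4) by simp
    have "(\<beta> * real p / (2 * real t)) ^ t \<le> (real (f q) / real t) ^ t"
      using \<open>\<beta> * real p / 2 \<le> f q\<close> \<open>0 < \<beta> * p\<close> assms(3)
      by (intro power_mono) (simp_all add: field_simps)
    also have "\<dots> \<le> real (f q choose t)"
      by (rule binomial_ge_n_over_k_pow_k[OF \<open>t \<le> f q\<close>])
    finally show ?thesis .
  qed
  have "\<beta> / 2 * (\<beta> / (2 * real t)) ^ t * real (card Q) * real p ^ t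
      = \<beta> / 2 * real (card Q) * (\<beta> * real p / (2 * real t)) ^ t"
    by (simp add: power_mult_distrib power_divide)
  also have "\<dots> \<le> card L * (\<beta> * real p / (2 * real t)) ^ t"
    using \<open>\<beta> / 2 * card Q \<le> card L\<close> \<open>0 < \<beta> * p\<close> by (intro mult_right_mono) auto
  also have "\<dots> \<le> (\<Sum>q\<in>L. real (f q choose t))"
    using large by (intro sum_bounded_below) auto
  also have "\<dots> \<le> (\<Sum>q\<in>Q. real (f q choose t))"
    using assms(1) by (intro sum_mono2) (auto simp: L_def)
  finally show ?thesis .
qed

lemma sum_card_supersets_eq_sum_binomial:
  assumes "finite P" "finite Q" "\<And>q. q \<in> Q \<Longrightarrow> N q \<subseteq> P"
  shows "(\<Sum>X\<in>{X. X \<subseteq> P \<and> card X = t}. card {q\<in>Q. X \<subseteq> N q}) = (\<Sum>q\<in>Q. card (N q) choose t)"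
proof (rule sum_multicount_gen)
  show "finite {X. X \<subseteq> P \<and> card X = t}"
    using assms(1) by (auto intro: finite_subset[of _ "Pow P"])
  show "\<forall>q\<in>Q. card {X\<in>{X. X \<subseteq> P \<and> card X = t}. X \<subseteq> N q} = card (N q) choose t"
  proof
    fix q assume "q \<in> Q"
    then have "{X\<in>{X. X \<subseteq> P \<and> card X = t}. X \<subseteq> N q} = {X. X \<subseteq> N q \<and> card X = t}"
      using assms(3) by blast
    moreover have "finite (N q)"
      using assms(1,3) \<open>q \<in> Q\<close> finite_subset by blast
    ultimately show "card {X\<in>{X. X \<subseteq> P \<and> card X = t}. X \<subseteq> N q} = card (N q) choose t"
      by (simp add: n_subsets)
  qed
qed (fact assms(2))

text \<open>Kovari-Sos-Turan supersaturation: by convexity of binomial coefficients many pairs (X, q)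
  have X a t-subset of N q, and there are at most card P ^ t candidates X.\<close>
lemma supersaturation_common_subset:
  fixes N :: "'q \<Rightarrow> 'p set" and t :: nat and \<beta> :: real
  assumes "finite P" "finite Q" "Q \<noteq> {}" "1 \<le> t" "\<And>q. q \<in> Q \<Longrightarrow> N q \<subseteq> P"
    and "2 * real t \<le> \<beta> * real (card P)"
    and "\<beta> * real (card P) * real (card Q) \<le> (\<Sum>q\<in>Q. real (card (N q)))"
  shows "\<exists>X\<subseteq>P. card X = t \<and>
    \<beta> / 2 * (\<beta> / (2 * real t)) ^ t * real (card Q) \<le> real (card {q\<in>Q. X \<subseteq> N q})"
proof -
  define T where "T = {X. X \<subseteq> P \<and> card X = t}"
  define g where "g X = card {q\<in>Q. X \<subseteq> N q}" for X
  define c where "c = \<beta> / 2 * (\<beta> / (2 * real t)) ^ t"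
  have "0 < \<beta> * card P" using assms(4,6) by linarith
  then have "0 < \<beta>" "0 < card P" by (simp_all add: zero_less_mult_iff)
  have "card (N q) \<le> card P" if "q \<in> Q" for q
    using card_mono[OF assms(1) assms(5)[OF that]] .
  then have "c * real (card Q) * real (card P) ^ t \<le> (\<Sum>q\<in>Q. real (card (N q) choose t))"
    unfolding c_def by (rule sum_binomial_ge[OF assms(2) _ assms(4,6,7)])
  also have "\<dots> = real (sum g T)"
    using sum_card_supersets_eq_sum_binomial[OF assms(1,2,5), where t = t] unfolding g_def T_def by simp
  finally have lower: "c * real (card Q) * real (card P) ^ t \<le> real (sum g T)" .
  moreover have "0 < c * real (card Q) * real (card P) ^ t"
    unfolding c_def using \<open>0 < \<beta>\<close> \<open>0 < card P\<close> assms(2,3,4) by (simp add: card_gt_0_iff)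
  ultimately have "T \<noteq> {}" by auto
  moreover have "finite T" unfolding T_def using assms(1) by (auto intro: finite_subset[of _ "Pow P"])
  ultimately have "Max (g ` T) \<in> g ` T" by (intro Max_in) auto
  then obtain X where "X \<in> T" and X_max: "Max (g ` T) = g X" by blast
  then have "t \<le> card P"
    unfolding T_def using assms(1) card_mono by blast
  have "sum g T \<le> card T * g X"
    using sum_le_card_Max[OF \<open>finite T\<close>, of g] X_max by simp
  also have "\<dots> \<le> card P ^ t * g X"
    unfolding T_def n_subsets[OF assms(1)] using binomial_le_pow[OF \<open>t \<le> card P\<close>] by simp
  finally have "c * real (card Q) * real (card P) ^ t \<le> real (g X) * real (card P) ^ t"
    using lower by (simp add: mult.commute flip: of_nat_le_iff[where 'a = real])
  then have "c * real (card Q) \<le> real (g X)"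
    using \<open>0 < card P\<close> by simp
  with \<open>X \<in> T\<close> show ?thesis unfolding T_def g_def c_def by blast
qed

definition contains_complete_multipartite :: "'b set \<Rightarrow> 'b set set \<Rightarrow> nat \<Rightarrow> nat \<Rightarrow> bool" where
  "contains_complete_multipartite V E k t \<longleftrightarrow>
     (\<exists>P. \<forall>i<k. P i \<subseteq> V \<and> card (P i) = t \<and>
        (\<forall>j<k. i \<noteq> j \<longrightarrow> P i \<inter> P j = {} \<and> (\<forall>x\<in>P i. \<forall>y\<in>P j. {x, y} \<in> E)))"

lemma contains_complete_tripartiteI:
  assumes "graph V E" "X \<subseteq> V" "Y \<subseteq> V" "Z \<subseteq> V" "card X = t" "card Y = t" "card Z = t"
    and "\<And>x y. x \<in> X \<Longrightarrow> y \<in> Y \<Longrightarrow> {x, y} \<in> E"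
    and "\<And>x z. x \<in> X \<Longrightarrow> z \<in> Z \<Longrightarrow> {x, z} \<in> E"
    and "\<And>y z. y \<in> Y \<Longrightarrow> z \<in> Z \<Longrightarrow> {y, z} \<in> E"
  shows "contains_complete_multipartite V E 3 t"
proof -
  define P where "P i = (if i = 0 then X else if i = 1 then Y else Z)" for i :: nat
  have edge: "{x, y} \<in> E" if "i < 3" "j < 3" "i \<noteq> j" "x \<in> P i" "y \<in> P j" for i j x y
  proof -
    have "i = 0 \<or> i = 1 \<or> i = 2" "j = 0 \<or> j = 1 \<or> j = 2" using that(1,2) by presburger+
    then have "x \<in> X \<and> y \<in> Y \<or> x \<in> X \<and> y \<in> Z \<or> x \<in> Y \<and> y \<in> Z \<or>
        y \<in> X \<and> x \<in> Y \<or> y \<in> X \<and> x \<in> Z \<or> y \<in> Y \<and> x \<in> Z"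
      using that(3-5) unfolding P_def by (elim disjE) simp_all
    then show ?thesis using assms(8-10) by (elim disjE conjE) (metis insert_commute)+
  qed
  have disjoint: "P i \<inter> P j = {}" if "i < 3" "j < 3" "i \<noteq> j" for i j
    using edge[OF that] graph_singleton_not_edge[OF assms(1)] by fastforce
  have parts: "P i \<subseteq> V" "card (P i) = t" for i
    unfolding P_def using assms(2-7) by simp_all
  show ?thesis
    unfolding contains_complete_multipartite_def
  proof (intro exI[of _ P] allI impI conjI ballI)
    fix i j :: nat and x y assume "i < 3" "j < 3" "i \<noteq> j" "x \<in> P i" "y \<in> P j"
    then show "{x, y} \<in> E" by (rule edge)
  next
    fix i :: nat assume "i < 3" show "P i \<subseteq> V" by (rule parts)
  next
    fix i :: nat assume "i < 3" show "card (P i) = t" by (rule parts)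
  next
    fix i j :: nat assume "i < 3" "j < 3" "i \<noteq> j" then show "P i \<inter> P j = {}" by (rule disjoint)
  qed
qed

lemma many_triangles_common_apex_set:
  fixes \<eta> :: real and t :: nat
  assumes "graph V E" "card V = n" "0 < \<eta>" "1 \<le> t" "2 * real t \<le> \<eta> * real n"
    and many: "\<eta> * real n ^ 3 \<le> real (triangle_incidences V E)"
  shows "\<exists>X\<subseteq>V. card X = t \<and>
    \<eta> / 2 * (\<eta> / (2 * real t)) ^ t * \<eta> * real n ^ 2
      \<le> real (card {e\<in>E. X \<subseteq> common_neighbours V E e})"
proof -
  define c where "c = \<eta> / 2 * (\<eta> / (2 * real t)) ^ t"
  have "0 < \<eta> * real n" using assms(4,5) by linarith
  then have "0 < real n" using assms(3) by (simp add: zero_less_mult_iff)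
  have "card (common_neighbours V E e) \<le> n" for e
    unfolding assms(2)[symmetric] common_neighbours_def
    by (rule card_mono) (auto simp: graph_finite[OF assms(1)])
  then have "real (triangle_incidences V E) \<le> real (card E) * real n"
    unfolding triangle_incidences_def of_nat_sum by (intro sum_bounded_above) simp
  with many have "real n * (\<eta> * real n ^ 2) \<le> real n * real (card E)"
    by (simp add: power3_eq_cube power2_eq_square ac_simps)
  then have edges: "\<eta> * real n ^ 2 \<le> real (card E)"
    using \<open>0 < real n\<close> by simp
  moreover have "0 < \<eta> * real n ^ 2"
    using \<open>0 < \<eta>\<close> \<open>0 < real n\<close> by simp
  ultimately have "E \<noteq> {}" by auto
  have "real (card E) \<le> real n ^ 2"
    using graph_finite_edges(2)[OF assms(1)] assms(2) by (metis of_nat_le_iff of_nat_power)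
  then have "\<eta> * real n * real (card E) \<le> \<eta> * real n * real n ^ 2"
    using \<open>0 < \<eta> * real n\<close> by (intro mult_left_mono) auto
  also have "\<dots> \<le> (\<Sum>e\<in>E. real (card (common_neighbours V E e)))"
    using many by (simp add: triangle_incidences_def power3_eq_cube power2_eq_square ac_simps)
  finally obtain X where "X \<subseteq> V" "card X = t"
    and X: "c * real (card E) \<le> real (card {e\<in>E. X \<subseteq> common_neighbours V E e})"
    using supersaturation_common_subset[OF graph_finite[OF assms(1)] graph_finite_edges(1)[OF assms(1)]
        \<open>E \<noteq> {}\<close> assms(4), of "common_neighbours V E" \<eta>] assms(2,5)
    unfolding c_def by (auto simp: common_neighbours_def)
  have "c * (\<eta> * real n ^ 2) \<le> c * real (card E)"
    using edges assms(3) by (intro mult_left_mono) (auto simp: c_def)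
  with X \<open>X \<subseteq> V\<close> \<open>card X = t\<close> show ?thesis
    unfolding c_def by (auto simp: mult.assoc)
qed

lemma dense_graph_common_neighbours:
  fixes \<gamma> :: real and t :: nat
  assumes "graph V E" "card V = n" "0 < \<gamma>" "1 \<le> t" "real t \<le> \<gamma> * real n"
    and dense: "\<gamma> * real n ^ 2 \<le> real (card E)"
  shows "\<exists>Y\<subseteq>V. card Y = t \<and> \<gamma> * (\<gamma> / real t) ^ t * real n \<le> real (card {z\<in>V. Y \<subseteq> neighbours V E z})"
proof -
  have "V \<noteq> {}" using assms(2-5) by (cases "n = 0") auto
  have "2 * \<gamma> * real (card V) * real (card V) \<le> (\<Sum>v\<in>V. real (degree V E v))"
    using dense assms(2) sum_degree[OF assms(1)]
    by (simp add: power2_eq_square mult.assoc flip: of_nat_sum)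
  then obtain Y where "Y \<subseteq> V" "card Y = t"
    "2 * \<gamma> / 2 * (2 * \<gamma> / (2 * real t)) ^ t * real (card V) \<le> real (card {z\<in>V. Y \<subseteq> neighbours V E z})"
    using supersaturation_common_subset[where N = "neighbours V E" and \<beta> = "2 * \<gamma>",
        OF graph_finite[OF assms(1)] graph_finite[OF assms(1)] \<open>V \<noteq> {}\<close> assms(4) neighbours_subset]
      assms(2,5) by auto
  then show ?thesis using assms(2) by auto
qed

text \<open>X is a common apex set of many edges; these edges form a dense graph, which contains
  the complete bipartite graph between Y and Z.\<close>
lemma complete_tripartite_if_many_triangles:
  fixes \<eta> :: real and t :: nat
  defines "\<gamma> \<equiv> \<eta> / 2 * (\<eta> / (2 * real t)) ^ t * \<eta>"
  assumes G: "graph V E" "card V = n" and "0 < \<eta>" "1 \<le> t"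
    and large: "2 * real t \<le> \<eta> * real n" "real t \<le> \<gamma> * real n" "real t \<le> \<gamma> * (\<gamma> / real t) ^ t * real n"
    and many: "\<eta> * real n ^ 3 \<le> real (triangle_incidences V E)"
  shows "contains_complete_multipartite V E 3 t"
proof -
  have "0 < \<gamma>" using assms(4,5) by (simp add: \<gamma>_def)
  obtain X where "X \<subseteq> V" "card X = t"
    and "\<gamma> * real n ^ 2 \<le> real (card {e\<in>E. X \<subseteq> common_neighbours V E e})"
    using many_triangles_common_apex_set[OF G assms(4,5) large(1) many] unfolding \<gamma>_def by blast
  moreover define C where "C = {e\<in>E. X \<subseteq> common_neighbours V E e}"
  ultimately have dense: "\<gamma> * real n ^ 2 \<le> real (card C)" by simp
  have "graph V C" unfolding C_def using G(1) by (rule graph_subset_edges) auto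
  then obtain Y where "Y \<subseteq> V" "card Y = t"
    and Z0: "\<gamma> * (\<gamma> / real t) ^ t * real n \<le> real (card {z\<in>V. Y \<subseteq> neighbours V C z})"
    using dense_graph_common_neighbours[OF _ G(2) \<open>0 < \<gamma>\<close> assms(5) large(2) dense] by blast
  have "t \<le> card {z\<in>V. Y \<subseteq> neighbours V C z}"
    using Z0 large(3) by linarith
  then obtain Z where "Z \<subseteq> {z\<in>V. Y \<subseteq> neighbours V C z}" "card Z = t"
    by (rule obtain_subset_with_card_n)
  then have YZ: "{z, y} \<in> E" "X \<subseteq> common_neighbours V E {z, y}" if "y \<in> Y" "z \<in> Z" for y z
    using that unfolding C_def neighbours_def by auto
  have "Y \<noteq> {}" "Z \<noteq> {}" using \<open>card Y = t\<close> \<open>card Z = t\<close> assms(5) by auto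
  show ?thesis
  proof (rule contains_complete_tripartiteI[OF G(1) \<open>X \<subseteq> V\<close> \<open>Y \<subseteq> V\<close> _ \<open>card X = t\<close> \<open>card Y = t\<close> \<open>card Z = t\<close>])
    show "Z \<subseteq> V" using \<open>Z \<subseteq> _\<close> by blast
    show "{x, y} \<in> E" if "x \<in> X" "y \<in> Y" for x y
      using YZ(2)[OF that(2)] \<open>Z \<noteq> {}\<close> that(1) by (fastforce simp: common_neighbours_def neighbours_def)
    show "{x, z} \<in> E" if "x \<in> X" "z \<in> Z" for x z
      using YZ(2)[OF _ that(2)] \<open>Y \<noteq> {}\<close> that(1) by (fastforce simp: common_neighbours_def neighbours_def)
    show "{y, z} \<in> E" if "y \<in> Y" "z \<in> Z" for y z
      using YZ(1)[OF that] by (simp add: insert_commute)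
  qed
qed

lemma many_triangles_imp_complete_tripartite:
  fixes \<eta> :: real and t :: nat
  assumes "0 < \<eta>" "1 \<le> t"
  shows "\<exists>N. \<forall>n\<ge>N. \<forall>(V::'b set) E. graph V E \<and> card V = n \<and>
    \<eta> * real n ^ 3 \<le> real (triangle_incidences V E) \<longrightarrow> contains_complete_multipartite V E 3 t"
proof -
  define \<gamma> where "\<gamma> = \<eta> / 2 * (\<eta> / (2 * real t)) ^ t * \<eta>"
  define \<kappa> where "\<kappa> = \<gamma> * (\<gamma> / real t) ^ t"
  have "0 < \<gamma>" "0 < \<kappa>" using assms by (simp_all add: \<gamma>_def \<kappa>_def)
  obtain N :: nat where N: "2 * real t / \<eta> + real t / \<gamma> + real t / \<kappa> \<le> N"
    using real_nat_ceiling_ge by blast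
  have large: "2 * real t \<le> \<eta> * real n" "real t \<le> \<gamma> * real n" "real t \<le> \<kappa> * real n" if "N \<le> n" for n
  proof -
    have "2 * real t / \<eta> + real t / \<gamma> + real t / \<kappa> \<le> real n"
      using N that by linarith
    moreover have "0 \<le> 2 * real t / \<eta>" "0 \<le> real t / \<gamma>" "0 \<le> real t / \<kappa>"
      using assms \<open>0 < \<gamma>\<close> \<open>0 < \<kappa>\<close> by simp_all
    ultimately have "2 * real t / \<eta> \<le> real n" "real t / \<gamma> \<le> real n" "real t / \<kappa> \<le> real n"
      by linarith+
    then show "2 * real t \<le> \<eta> * real n" "real t \<le> \<gamma> * real n" "real t \<le> \<kappa> * real n"
      using assms \<open>0 < \<gamma>\<close> \<open>0 < \<kappa>\<close> by (simp_all add: pos_divide_le_eq mult.commute)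
  qed
  show ?thesis
  proof (intro exI[of _ N] allI impI, elim conjE)
    fix n and V :: "'b set" and E
    assume "N \<le> n" "graph V E" "card V = n" "\<eta> * real n ^ 3 \<le> real (triangle_incidences V E)"
    then show "contains_complete_multipartite V E 3 t"
      using large[OF \<open>N \<le> n\<close>, unfolded \<gamma>_def \<kappa>_def]
      by (intro complete_tripartite_if_many_triangles[OF _ _ assms]) simp_all
  qed
qed

section \<open>Three-colourable graphs embed into complete tripartite graphs\<close>

definition colourable :: "nat \<Rightarrow> 'a set \<Rightarrow> 'a set set \<Rightarrow> bool" where
  "colourable k V E \<longleftrightarrow> (\<exists>c :: 'a \<Rightarrow> nat. c ` V \<subseteq> {..<k} \<and> (\<forall>u v. {u, v} \<in> E \<longrightarrow> c u \<noteq> c v))"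

lemma colourable_mono:
  assumes "colourable k V E" "k \<le> l"
  shows "colourable l V E"
  using assms unfolding colourable_def by (meson lessThan_subset_iff order_trans)

lemma bipartite_imp_colourable:
  assumes "graph V E" "bipartite V E"
  shows "colourable 2 V E"
proof -
  obtain A where A: "\<And>e. e \<in> E \<Longrightarrow> card (e \<inter> A) = 1"
    using assms(2) unfolding bipartite_def by blast
  have "(u \<in> A) \<noteq> (v \<in> A)" if "{u, v} \<in> E" for u v
  proof -
    have "u \<noteq> v" using graph_singleton_not_edge[OF assms(1)] that by force
    then show ?thesis using A[OF that] by (cases "u \<in> A"; cases "v \<in> A") (auto simp: Int_insert_left)
  qed
  then show ?thesis
    unfolding colourable_def by (intro exI[of _ "\<lambda>v. if v \<in> A then 0 else 1"]) auto
qed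

lemma odd_cycle_colourable:
  assumes "odd_cycle V E"
  shows "colourable 3 V E"
proof -
  obtain k :: nat and g where "3 \<le> k" "bij_betw g {0..<k} V" and E: "E = {{g i, g ((i + 1) mod k)} | i. i < k}"
    using assms unfolding odd_cycle_def by blast
  define col where "col i = (if i = k - 1 then 2 else i mod 2)" for i :: nat
  have col_step: "col i \<noteq> col ((i + 1) mod k)" if "i < k" for i
  proof (cases "i = k - 1")
    case True
    then show ?thesis using \<open>3 \<le> k\<close> by (simp add: col_def)
  next
    case False
    with that have "(i + 1) mod k = i + 1" by simp
    then show ?thesis using False by (simp add: col_def mod_Suc)
  qed
  define c where "c v = col (inv_into {0..<k} g v)" for v
  have c_g: "c (g i) = col i" if "i < k" for i
    using that \<open>bij_betw g {0..<k} V\<close> by (simp add: c_def bij_betw_def)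
  have "c u \<noteq> c v" if uv: "{u, v} \<in> E" for u v
  proof -
    obtain i where "i < k" "{u, v} = {g i, g ((i + 1) mod k)}"
      using uv unfolding E by blast
    moreover have "(i + 1) mod k < k" using \<open>3 \<le> k\<close> by simp
    ultimately show ?thesis
      using c_g col_step[of i] by (auto simp: doubleton_eq_iff)
  qed
  moreover have "c ` V \<subseteq> {..<3}"
    unfolding c_def col_def by auto
  ultimately show ?thesis unfolding colourable_def by blast
qed

lemma graph_tri_blowup:
  assumes "graph V E"
  shows "graph (tri_blowup_V V E) (tri_blowup_E V E)"
  unfolding graph_def
proof (intro conjI ballI)
  show "finite (tri_blowup_V V E)"
    unfolding tri_blowup_V_def using graph_finite[OF assms] graph_finite_edges(1)[OF assms] by simp
next
  fix e assume "e \<in> tri_blowup_E V E"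
  then consider (old) f where "f \<in> E" "e = Inl ` f" | (new) u f where "f \<in> E" "u \<in> f" "e = {Inl u, Inr f}"
    unfolding tri_blowup_E_def by blast
  then show "\<exists>u v. e = {u, v} \<and> u \<noteq> v \<and> u \<in> tri_blowup_V V E \<and> v \<in> tri_blowup_V V E"
  proof cases
    case old
    then show ?thesis using assms unfolding tri_blowup_V_def by (auto elim!: graph_edgeE)
  next
    case new
    then show ?thesis using graph_edge_subset[OF assms] unfolding tri_blowup_V_def by blast
  qed
qed

lemma Least_not_in_doubleton:
  fixes a b :: nat
  shows "(LEAST i. i \<notin> {a, b}) < 3" and "(LEAST i. i \<notin> {a, b}) \<notin> {a, b}"
proof -
  have "\<exists>i::nat. i < 3 \<and> i \<noteq> a \<and> i \<noteq> b" by presburger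
  then obtain i :: nat where "i < 3" "i \<notin> {a, b}" by auto
  moreover from this(2) have "(LEAST i. i \<notin> {a, b}) \<le> i" by (rule Least_le)
  ultimately show "(LEAST i. i \<notin> {a, b}) < 3" by simp
  from \<open>i \<notin> {a, b}\<close> show "(LEAST i. i \<notin> {a, b}) \<notin> {a, b}" by (rule LeastI)
qed

lemma colourable_tri_blowup:
  fixes V :: "'a set"
  assumes "graph V E" "colourable 3 V E"
  shows "colourable 3 (tri_blowup_V V E) (tri_blowup_E V E)"
proof -
  obtain c :: "'a \<Rightarrow> nat" where c: "c ` V \<subseteq> {..<3}" "\<forall>u v. {u, v} \<in> E \<longrightarrow> c u \<noteq> c v"
    using assms(2) unfolding colourable_def by blast
  define missing where "missing f = (LEAST i. i \<notin> c ` f)" for f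
  have missing: "missing f < 3" "missing f \<notin> c ` f" if f: "f \<in> E" for f
  proof -
    obtain a b where "f = {a, b}"
      using assms(1) f by (blast elim: graph_edgeE)
    then show "missing f < 3" "missing f \<notin> c ` f"
      unfolding missing_def using Least_not_in_doubleton[of "c a" "c b"] by simp_all
  qed
  define col where "col = case_sum c missing"
  have "col ` tri_blowup_V V E \<subseteq> {..<3}"
    using c(1) missing(1) unfolding col_def tri_blowup_V_def by auto
  moreover have "col x \<noteq> col y" if "{x, y} \<in> tri_blowup_E V E" for x y
  proof -
    from that consider (old) f where "f \<in> E" "{x, y} = Inl ` f"
      | (new) u f where "f \<in> E" "u \<in> f" "{x, y} = {Inl u, Inr f}"
      unfolding tri_blowup_E_def by blast
    then show ?thesis
    proof cases
      case old
      then obtain a b where "{a, b} \<in> E" "{x, y} = {Inl a, Inl b}"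
        using assms(1) by (auto elim: graph_edgeE)
      moreover have "{b, a} \<in> E \<longleftrightarrow> {a, b} \<in> E" by (simp add: insert_commute)
      ultimately show ?thesis
        using c(2) unfolding col_def doubleton_eq_iff by auto
    next
      case new
      then have "c u \<noteq> missing f" using missing(2) by (metis image_eqI)
      with new show ?thesis unfolding col_def doubleton_eq_iff by auto
    qed
  qed
  ultimately show ?thesis unfolding colourable_def by blast
qed

lemma inj_into_colour_classes:
  fixes c :: "'a \<Rightarrow> nat" and P :: "nat \<Rightarrow> 'b set"
  assumes "finite A" "\<And>z. z \<in> A \<Longrightarrow> c z < k"
    and "\<And>i. i < k \<Longrightarrow> finite (P i)" "\<And>i. i < k \<Longrightarrow> card A \<le> card (P i)"
    and disjoint: "\<And>i j. i < k \<Longrightarrow> j < k \<Longrightarrow> i \<noteq> j \<Longrightarrow> P i \<inter> P j = {}"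
  shows "\<exists>f. inj_on f A \<and> (\<forall>z\<in>A. f z \<in> P (c z))"
proof -
  have "\<exists>h. h ` A \<subseteq> P i \<and> inj_on h A" if "i < k" for i
    using assms(1,3,4) that by (intro card_le_inj) auto
  then obtain H where H: "\<And>i. i < k \<Longrightarrow> H i ` A \<subseteq> P i \<and> inj_on (H i) A" by metis
  define f where "f z = H (c z) z" for z
  have f_part: "f z \<in> P (c z)" if "z \<in> A" for z
    using H[OF assms(2)[OF that]] that unfolding f_def by auto
  have "inj_on f A"
  proof (rule inj_onI)
    fix y z assume "y \<in> A" "z \<in> A" "f y = f z"
    have "c y = c z"
    proof (rule ccontr)
      assume "c y \<noteq> c z"
      then have "P (c y) \<inter> P (c z) = {}"
        using disjoint assms(2) \<open>y \<in> A\<close> \<open>z \<in> A\<close> by simp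
      then show False
        using f_part[OF \<open>y \<in> A\<close>] f_part[OF \<open>z \<in> A\<close>] \<open>f y = f z\<close> by auto
    qed
    then show "y = z"
      using H[OF assms(2)[OF \<open>y \<in> A\<close>]] \<open>y \<in> A\<close> \<open>z \<in> A\<close> \<open>f y = f z\<close>
      unfolding f_def by (auto dest: inj_onD)
  qed
  with f_part show ?thesis by blast
qed

lemma contains_copy_if_colourable:
  fixes V :: "'b set" and VH :: "'a set"
  assumes "finite V" "graph VH EH" "colourable k VH EH" "card VH \<le> t"
    and "contains_complete_multipartite V E k t"
  shows "contains_copy V E VH EH"
proof -
  obtain c :: "'a \<Rightarrow> nat" where c: "c ` VH \<subseteq> {..<k}" "\<forall>u v. {u, v} \<in> EH \<longrightarrow> c u \<noteq> c v"
    using assms(3) unfolding colourable_def by blast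
  obtain P :: "nat \<Rightarrow> 'b set" where P: "\<forall>i<k. P i \<subseteq> V \<and> card (P i) = t \<and>
      (\<forall>j<k. i \<noteq> j \<longrightarrow> P i \<inter> P j = {} \<and> (\<forall>x\<in>P i. \<forall>y\<in>P j. {x, y} \<in> E))"
    using assms(5) unfolding contains_complete_multipartite_def by blast
  have P_part: "P i \<subseteq> V" "card (P i) = t" if "i < k" for i
    using P that by simp_all
  have P_edge: "{x, y} \<in> E" if "i < k" "j < k" "i \<noteq> j" "x \<in> P i" "y \<in> P j" for i j x y
    using P that by simp
  have colour: "c z < k" if "z \<in> VH" for z
    using c(1) that by auto
  have "\<exists>f. inj_on f VH \<and> (\<forall>z\<in>VH. f z \<in> P (c z))"
  proof (rule inj_into_colour_classes[OF graph_finite[OF assms(2)] colour])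
    fix i assume "i < k"
    show "finite (P i)" using P_part(1)[OF \<open>i < k\<close>] assms(1) by (rule finite_subset)
    show "card VH \<le> card (P i)" using P_part(2)[OF \<open>i < k\<close>] assms(4) by simp
  next
    fix i j assume "i < k" "j < k" "i \<noteq> j"
    then show "P i \<inter> P j = {}" using P by simp
  qed
  then obtain f where "inj_on f VH" and f_part: "\<forall>z\<in>VH. f z \<in> P (c z)" by blast
  moreover have "f ` VH \<subseteq> V"
    using P_part(1) colour f_part by blast
  moreover have "{f u, f v} \<in> E" if "{u, v} \<in> EH" for u v
  proof -
    have "u \<in> VH" "v \<in> VH" using graph_edge_subset[OF assms(2) that] by auto
    moreover have "c u \<noteq> c v" using c(2) that by blast
    ultimately show ?thesis using P_edge colour f_part by blast
  qed
  ultimately show ?thesis unfolding contains_copy_def by blast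
qed

section \<open>Graphs without a copy of a three-colourable graph\<close>

lemma few_triangles_if_no_copy:
  fixes \<eta> :: real
  assumes "graph VH EH" "colourable 3 VH EH" "0 < \<eta>"
  shows "\<exists>N. \<forall>n\<ge>N. \<forall>(V::'b set) E. graph V E \<and> card V = n \<and> \<not> contains_copy V E VH EH \<longrightarrow>
    real (triangle_incidences V E) < \<eta> * real n ^ 3"
proof -
  obtain N where N: "\<forall>n\<ge>N. \<forall>(V::'b set) E. graph V E \<and> card V = n \<and>
      \<eta> * real n ^ 3 \<le> real (triangle_incidences V E) \<longrightarrow> contains_complete_multipartite V E 3 (Suc (card VH))"
    using many_triangles_imp_complete_tripartite[OF assms(3), of "Suc (card VH)"] by auto
  show ?thesis
  proof (intro exI[of _ N] allI impI, elim conjE)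
    fix n and V :: "'b set" and E
    assume "N \<le> n" "graph V E" "card V = n" and free: "\<not> contains_copy V E VH EH"
    show "real (triangle_incidences V E) < \<eta> * real n ^ 3"
    proof (rule ccontr)
      assume "\<not> ?thesis"
      then have "contains_complete_multipartite V E 3 (Suc (card VH))"
        using N \<open>N \<le> n\<close> \<open>graph V E\<close> \<open>card V = n\<close> by (simp add: not_less)
      then have "contains_copy V E VH EH"
        by (rule contains_copy_if_colourable[OF graph_finite[OF \<open>graph V E\<close>] assms(1,2) le_SucI[OF order_refl]])
      with free show False by contradiction
    qed
  qed
qed

lemma near_bipartite_if_no_copy:
  fixes \<delta> :: real
  assumes "graph VH EH" "colourable 3 VH EH" "0 < \<delta>"
  shows "\<exists>\<epsilon>::real. \<epsilon> > 0 \<and> (\<exists>N. \<forall>n \<ge> N. \<forall>(V::'b set) E.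
            graph V E \<and> card V = n \<and> \<not> contains_copy V E VH EH \<and>
            real (card E) \<ge> real n ^ 2 / 4 - \<epsilon> * real n ^ 2 \<longrightarrow>
            (\<exists>D \<subseteq> E. real (card D) \<le> \<delta> * real n ^ 2 \<and> bipartite V (E - D)))"
proof -
  obtain N where N: "\<forall>n\<ge>N. \<forall>(V::'b set) E. graph V E \<and> card V = n \<and> \<not> contains_copy V E VH EH
      \<longrightarrow> real (triangle_incidences V E) < \<delta> / 3 * real n ^ 3"
    using few_triangles_if_no_copy[OF assms(1,2), of "\<delta> / 3"] assms(3) by auto
  show ?thesis
  proof (intro exI[of _ "\<delta> / 3"] conjI exI[of _ "max N 1"] allI impI; (elim conjE)?)
    fix n and V :: "'b set" and E
    assume "max N 1 \<le> n" "graph V E" "card V = n" "\<not> contains_copy V E VH EH"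
      and "real n ^ 2 / 4 - \<delta> / 3 * real n ^ 2 \<le> real (card E)"
    moreover from this have "real (triangle_incidences V E) \<le> \<delta> / 3 * real n ^ 3"
      using N by (simp add: less_imp_le)
    ultimately show "\<exists>D\<subseteq>E. real (card D) \<le> \<delta> * real n ^ 2 \<and> bipartite V (E - D)"
      using near_bipartite_if_few_triangles[of V E n "\<delta> / 3"] by simp
  qed (use assms(3) in simp)
qed

lemma edges_le_if_no_copy:
  fixes \<epsilon> :: real
  assumes "graph VH EH" "colourable 3 VH EH" "0 < \<epsilon>"
  shows "\<exists>N. \<forall>n \<ge> N. \<forall>(V::'b set) E. graph V E \<and> card V = n \<and> \<not> contains_copy V E VH EH \<longrightarrow>
            real (card E) \<le> real n ^ 2 / 4 + \<epsilon> * real n ^ 2"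
  using few_triangles_if_no_copy[OF assms] edges_le_if_few_triangles less_imp_le by blast

theorem proposition2p9:
  fixes VF :: "'a set" and EF :: "'a set set"
  assumes "graph VF EF"
    and "bipartite VF EF \<or> odd_cycle VF EF"
  shows "(\<forall>\<delta>::real. \<delta> > 0 \<longrightarrow> (\<exists>\<epsilon>::real. \<epsilon> > 0 \<and> (\<exists>N. \<forall>n \<ge> N. \<forall>(V::'b set) E.
            graph V E \<and> card V = n \<and>
            \<not> contains_copy V E (tri_blowup_V VF EF) (tri_blowup_E VF EF) \<and>
            real (card E) \<ge> real n ^ 2 / 4 - \<epsilon> * real n ^ 2 \<longrightarrow>
            (\<exists>D \<subseteq> E. real (card D) \<le> \<delta> * real n ^ 2 \<and> bipartite V (E - D)))))
       \<and> (\<forall>\<epsilon>::real. \<epsilon> > 0 \<longrightarrow> (\<exists>N. \<forall>n \<ge> N. \<forall>(V::'b set) E.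
            graph V E \<and> card V = n \<and>
            \<not> contains_copy V E (tri_blowup_V VF EF) (tri_blowup_E VF EF) \<longrightarrow>
            real (card E) \<le> real n ^ 2 / 4 + \<epsilon> * real n ^ 2))"
proof -
  have "colourable 3 VF EF"
    using assms(2) bipartite_imp_colourable[OF assms(1)] colourable_mono[of 2 VF EF 3] odd_cycle_colourable
    by auto
  then have blowup: "graph (tri_blowup_V VF EF) (tri_blowup_E VF EF)"
    "colourable 3 (tri_blowup_V VF EF) (tri_blowup_E VF EF)"
    using assms(1) by (simp_all add: graph_tri_blowup colourable_tri_blowup)
  show ?thesis
    by (intro conjI allI impI near_bipartite_if_no_copy[OF blowup] edges_le_if_no_copy[OF blowup])
qed

end
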